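(* Suppose $\mathcal{G}_k$ is bidirectional for every $k$ and $\{\mathcal{G}_k\}$ is infinitely jointly connected. Consider an algorithm in $\mathcal{A}_{\rm ave}$ for which there is a constant $\alpha_*\in(0,1)$ such that either $\alpha_k\ge\alpha_*$ for all $k$, or $1-\alpha_k-\eta_k\ge\alpha_*$ for all $k$. Then the algorithm achieves global asymptotic consensus.
   Context: Network of nodes $\mathcal{V}=\{1,\dots,n\}$, $n\ge 3$, discrete time, states $x_i(k)\in\mathbb{R}$. At each time $k$ a digraph $\mathcal{G}_k=(\mathcal{V},\mathcal{E}_k)$ is given; $j$ is a neighbor of $i$ at time $k$ if $(j,i)\in\mathcal{E}_k$, every node is always its own neighbor; $\mathcal{N}_i(k)$ is the neighbor set. The algorithm is $$x_i(k+1)=\eta_k x_i(k)+\alpha_k\min_{j\in\mathcal{N}_i(k)}x_j(k)+(1-\eta_k-\alpha_k)\max_{j\in\mathcal{N}_i(k)}x_j(k),$$ with node-independent parameters; $\mathcal{A}_{\rm ave}$ consists of those with $\eta_k\in(0,1]$, $\alpha_k\in[0,1-\eta_k]$ for all $k$. Global asymptotic consensus: for every initial time $k_0\ge0$ and initial value $x(k_0)=x^0\in\mathbb{R}^n$ there is $z_*$ with $x_i(k)\to z_*$ for all $i$. A digraph is bidirectional if $(i,j)\in\mathcal{E}$ iff $(j,i)\in\mathcal{E}$; a bidirectional graph is connected if there is a path between any two nodes. $\mathcal{G}([k,\infty))=(\mathcal{V},\cup_{s\ge k}\mathcal{E}_s)$. A sequence of bidirectional graphs is infinitely jointly connected if $\mathcal{G}([k,\infty))$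 is connected for all $k\ge0$. *)

theory Defs
  imports "HOL-Analysis.Analysis"
begin

(* Nodes are the elements of a finite type 'n; E k is the edge set of G_k;
   (j,i) \<in> E k means j is a neighbor of i at time k. *)

definition neighbors :: "(nat \<Rightarrow> ('n \<times> 'n) set) \<Rightarrow> nat \<Rightarrow> 'n \<Rightarrow> 'n set" where
  "neighbors E k i = {j. (j, i) \<in> E k} \<union> {i}"

definition bidirectional :: "('n \<times> 'n) set \<Rightarrow> bool" where
  "bidirectional Ed \<longleftrightarrow> (\<forall>i j. (i, j) \<in> Ed \<longleftrightarrow> (j, i) \<in> Ed)"

definition connected_graph :: "('n \<times> 'n) set \<Rightarrow> bool" where
  "connected_graph Ed \<longleftrightarrow> (\<forall>i j. (i, j) \<in> Ed\<^sup>*)"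

definition union_graph_from :: "(nat \<Rightarrow> ('n \<times> 'n) set) \<Rightarrow> nat \<Rightarrow> ('n \<times> 'n) set" where
  "union_graph_from E k = (\<Union>s\<in>{k..}. E s)"

definition infinitely_jointly_connected :: "(nat \<Rightarrow> ('n \<times> 'n) set) \<Rightarrow> bool" where
  "infinitely_jointly_connected E \<longleftrightarrow> (\<forall>k. connected_graph (union_graph_from E k))"

definition step :: "(nat \<Rightarrow> ('n \<times> 'n) set) \<Rightarrow> (nat \<Rightarrow> real) \<Rightarrow> (nat \<Rightarrow> real)
                     \<Rightarrow> nat \<Rightarrow> ('n \<Rightarrow> real) \<Rightarrow> ('n \<Rightarrow> real)" where
  "step E \<eta> \<alpha> k x = (\<lambda>i. \<eta> k * x i
       + \<alpha> k * Min (x ` neighbors E k i)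
       + (1 - \<eta> k - \<alpha> k) * Max (x ` neighbors E k i))"

(* trajectory started at time k0 from x0: traj ... m = x(k0 + m) *)
fun traj :: "(nat \<Rightarrow> ('n \<times> 'n) set) \<Rightarrow> (nat \<Rightarrow> real) \<Rightarrow> (nat \<Rightarrow> real)
              \<Rightarrow> nat \<Rightarrow> ('n \<Rightarrow> real) \<Rightarrow> nat \<Rightarrow> ('n \<Rightarrow> real)" where
  "traj E \<eta> \<alpha> k0 x0 0 = x0"
| "traj E \<eta> \<alpha> k0 x0 (Suc m) = step E \<eta> \<alpha> (k0 + m) (traj E \<eta> \<alpha> k0 x0 m)"

definition global_asymptotic_consensus ::
  "(nat \<Rightarrow> ('n::finite \<times> 'n) set) \<Rightarrow> (nat \<Rightarrow> real) \<Rightarrow> (nat \<Rightarrow> real) \<Rightarrow> bool" where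
  "global_asymptotic_consensus E \<eta> \<alpha> \<longleftrightarrow>
     (\<forall>k0 x0. \<exists>z. \<forall>i. (\<lambda>m. traj E \<eta> \<alpha> k0 x0 m i) \<longlonglongrightarrow> z)"

definition in_A_ave :: "(nat \<Rightarrow> real) \<Rightarrow> (nat \<Rightarrow> real) \<Rightarrow> bool" where
  "in_A_ave \<eta> \<alpha> \<longleftrightarrow> (\<forall>k. 0 < \<eta> k \<and> \<eta> k \<le> 1 \<and> 0 \<le> \<alpha> k \<and> \<alpha> k \<le> 1 - \<eta> k)"

end

theory Submission
  imports Defs
begin

(* By the symmetry x \<mapsto> -x, which swaps min and max and hence the weights
   \<alpha>_k and 1 - \<eta>_k - \<alpha>_k, it suffices to treat \<alpha>_k \<ge> \<alpha>_*.
   Along a trajectory every new value lies between the min and the max over the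
   neighbourhood, so the global maximum M(t) decreases to some M_* and the global
   minimum m(t) increases to some m_*.  Measure each node by its deficit
   u = M_* - x.  Once M(t) \<le> M_* + e, a node is pulled to within a factor \<alpha>_*
   (up to an error e) of the deficit of any of its neighbours.  Such deficit
   dynamics are studied abstractly in the locale deficit_dynamics: a set of
   nodes with small deficits, separated by a gap from the rest, keeps its
   separation until a cut edge appears, and then loses a node while the gap
   shrinks by the factor \<alpha>_*.  A pigeonhole argument over n geometric
   thresholds then bounds the persistent spread M_* - m_* by n^2 e / \<alpha>_*^(n^2);
   as e is arbitrary, M_* = m_* and all nodes are squeezed to the common limit. *)

text \<open>An ascending chain of nonempty subsets of a finite type must stall
  within CARD steps; this is the pigeonhole step locating a gap in the deficits.\<close>
lemma ascending_chain_stalls: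
  fixes S :: "nat \<Rightarrow> 'a::finite set"
  assumes chain: "\<And>j. S j \<subseteq> S (Suc j)" and start: "S 0 \<noteq> {}"
  shows "\<exists>j<CARD('a). S j = S (Suc j)"
proof (rule ccontr)
  assume "\<not> ?thesis"
  then have grow: "card (S j) < card (S (Suc j))" if "j < CARD('a)" for j
    using chain[of j] that by (simp add: psubset_card_mono psubset_eq)
  have "j + 1 \<le> card (S j)" if "j \<le> CARD('a)" for j
    using that
  proof (induction j)
    case 0
    then show ?case using start by (simp add: Suc_leI card_gt_0_iff)
  next
    case (Suc j)
    then show ?case using grow[of j] by simp
  qed
  moreover have "card (S CARD('a)) \<le> CARD('a)"
    by (rule card_mono) simp_all
  ultimately show False by fastforce
qed

lemma rtrancl_leaves_set:
  assumes "(p, q) \<in> R\<^sup>*" "p \<in> A" "q \<notin> A"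
  shows "\<exists>i j. (i, j) \<in> R \<and> i \<in> A \<and> j \<notin> A"
  using assms
proof (induction rule: rtrancl_induct)
  case base
  then show ?case by simp
next
  case (step y z)
  then show ?case by (cases "y \<in> A") auto
qed

lemma mix_between:
  fixes h w mn v mx :: real
  assumes "0 \<le> h" "0 \<le> w" "w \<le> 1 - h" "mn \<le> v" "v \<le> mx"
  shows "mn \<le> h * v + w * mn + (1 - h - w) * mx"
    and "h * v + w * mn + (1 - h - w) * mx \<le> mx"
proof -
  have "h * mn \<le> h * v" "h * v \<le> h * mx" "w * mn \<le> w * mx"
       "(1 - h - w) * mn \<le> (1 - h - w) * mx"
    using assms by (simp_all add: mult_left_mono)
  then show "mn \<le> h * v + w * mn + (1 - h - w) * mx"
    and "h * v + w * mn + (1 - h - w) * mx \<le> mx"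
    by (simp_all add: algebra_simps)
qed

lemma mix_upper:
  fixes h w mn v mx a :: real
  assumes "0 \<le> h" "a \<le> w" "w \<le> 1 - h" "v \<le> mx" "mn \<le> mx"
  shows "h * v + w * mn + (1 - h - w) * mx \<le> a * mn + (1 - a) * mx"
proof -
  have "h * v \<le> h * mx" "(w - a) * mn \<le> (w - a) * mx"
    using assms by (simp_all add: mult_left_mono)
  then show ?thesis by (simp add: algebra_simps)
qed

lemma Min_image_attained:
  assumes "finite S" "S \<noteq> {}"
  shows "\<exists>j\<in>S. f j = Min (f ` S)"
proof -
  have "Min (f ` S) \<in> f ` S" using assms by (intro Min_in) auto
  then show ?thesis by (auto simp: image_iff)
qed

lemma Max_image_attained:
  assumes "finite S" "S \<noteq> {}"
  shows "\<exists>j\<in>S. f j = Max (f ` S)"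
proof -
  have "Max (f ` S) \<in> f ` S" using assms by (intro Max_in) auto
  then show ?thesis by (auto simp: image_iff)
qed

section \<open>Abstract deficit dynamics\<close>

text \<open>u t i is the deficit of node i at time t, N t i its (symmetric, reflexive)
  neighbourhood.\<close>
locale deficit_dynamics =
  fixes N :: "nat \<Rightarrow> 'n::finite \<Rightarrow> 'n set" and u :: "nat \<Rightarrow> 'n \<Rightarrow> real"
    and K :: nat and a e :: real
  assumes nbr_sym: "\<And>t i j. j \<in> N t i \<Longrightarrow> i \<in> N t j"
    and nbr_refl: "\<And>t i. i \<in> N t i"
    and above_nbr: "\<And>t i. \<exists>j\<in>N t i. u t j \<le> u (Suc t) i"
    and below_nbr: "\<And>t i. \<exists>j\<in>N t i. u (Suc t) i \<le> u t j"
    and pulled: "\<And>t i j. K \<le> t \<Longrightarrow> j \<in> N t i \<Longrightarrow> a * u t j - e \<le> u (Suc t) i"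
    and nonpos_node: "\<And>t. \<exists>i. u t i \<le> 0"
    and cuts_crossed: "\<And>t A. A \<noteq> {} \<Longrightarrow> A \<noteq> UNIV \<Longrightarrow> \<exists>s\<ge>t. \<exists>i\<in>A. \<exists>j\<in>N s i. j \<notin> A"
    and a_pos: "0 < a" and a_le_1: "a \<le> 1" and e_nonneg: "0 \<le> e"
begin

definition separated :: "nat \<Rightarrow> 'n set \<Rightarrow> real \<Rightarrow> real \<Rightarrow> bool" where
  "separated t A c \<theta> \<longleftrightarrow> (\<forall>i\<in>A. u t i \<le> c) \<and> (\<forall>i. i \<notin> A \<longrightarrow> \<theta> < u t i)"

definition crosses :: "nat \<Rightarrow> 'n set \<Rightarrow> bool" where
  "crosses s A \<longleftrightarrow> (\<exists>i\<in>A. \<exists>j\<in>N s i. j \<notin> A)"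

text \<open>Without a cut edge, every node only sees its own side, so the separation
  survives one step.\<close>
lemma separated_step:
  assumes sep: "separated t A c \<theta>" and no_cross: "\<not> crosses t A"
  shows "separated (Suc t) A c \<theta>"
  unfolding separated_def
proof (intro conjI ballI allI impI)
  fix i assume "i \<in> A"
  obtain j where "j \<in> N t i" "u (Suc t) i \<le> u t j" using below_nbr by blast
  moreover from this \<open>i \<in> A\<close> no_cross have "j \<in> A" unfolding crosses_def by blast
  ultimately show "u (Suc t) i \<le> c" using sep unfolding separated_def by force
next
  fix i assume "i \<notin> A"
  obtain j where "j \<in> N t i" "u t j \<le> u (Suc t) i" using above_nbr by blast
  moreover from this \<open>i \<notin> A\<close> no_cross have "j \<notin> A"
    using nbr_sym unfolding crosses_def by blast
  ultimately show "\<theta> < u (Suc t) i" using sep unfolding separated_def by force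
qed

lemma separated_persists:
  assumes "separated t A c \<theta>" "\<And>d. d < n \<Longrightarrow> \<not> crosses (t + d) A"
  shows "separated (t + n) A c \<theta>"
  using assms by (induction n) (simp_all add: separated_step)

lemma first_crossing:
  assumes "A \<noteq> {}" "A \<noteq> UNIV"
  obtains s where "t \<le> s" "crosses s A" "\<And>s'. t \<le> s' \<Longrightarrow> s' < s \<Longrightarrow> \<not> crosses s' A"
proof -
  define P where "P s \<longleftrightarrow> t \<le> s \<and> crosses s A" for s
  have "\<exists>s. P s" using cuts_crossed[OF assms, of t] unfolding P_def crosses_def by blast
  then have "P (LEAST s. P s)" by (rule LeastI_ex)
  moreover have "\<not> crosses s' A" if "t \<le> s'" "s' < (LEAST s. P s)" for s'
    using not_less_Least[OF that(2)] that(1) unfolding P_def by blast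
  ultimately show ?thesis using that unfolding P_def by blast
qed

text \<open>At a crossing time after K, the nodes of A that see outside of A are
  pulled up: a strictly smaller set stays below c, with the gap shrunk to
  a \<theta> - e.\<close>
lemma separated_shrinks:
  assumes "K \<le> s" and sep: "separated s A c \<theta>" and "crosses s A"
  shows "\<exists>A'. A' \<subset> A \<and> separated (Suc s) A' c (a * \<theta> - e)"
proof -
  define A' where "A' = {i\<in>A. N s i \<subseteq> A}"
  have "A' \<subset> A" using \<open>crosses s A\<close> unfolding A'_def crosses_def by blast
  moreover have "u (Suc s) i \<le> c" if "i \<in> A'" for i
  proof -
    obtain j where "j \<in> N s i" "u (Suc s) i \<le> u s j" using below_nbr by blast
    moreover from this \<open>i \<in> A'\<close> have "u s j \<le> c" using sep unfolding A'_def separated_def by blast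
    ultimately show ?thesis by linarith
  qed
  moreover have "a * \<theta> - e < u (Suc s) i" if "i \<notin> A'" for i
  proof -
    obtain j where j: "j \<in> N s i" "j \<notin> A" using \<open>i \<notin> A'\<close> nbr_refl unfolding A'_def by blast
    then have "a * \<theta> < a * u s j" using sep a_pos unfolding separated_def by simp
    then show ?thesis using pulled[OF \<open>K \<le> s\<close> j(1)] by linarith
  qed
  ultimately show ?thesis unfolding separated_def by blast
qed

text \<open>Each cut crossing removes a
  node from the set; when it is empty the nonpositive node is a contradiction.\<close>
lemma no_separation:
  assumes "K \<le> t" "card A \<le> r" "0 \<le> c" "\<And>s. \<exists>i. c < u s i"
    and "c + r * e \<le> a ^ r * \<theta>"
  shows "\<not> separated t A c \<theta>"
  using assms(1,2,5)
proof (induction r arbitrary: t A \<theta>)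
  case 0
  then have "A = {}" "c \<le> \<theta>" by auto
  obtain i where "u t i \<le> 0" using nonpos_node by blast
  show ?case
  proof
    assume "separated t A c \<theta>"
    then have "\<theta> < u t i" using \<open>A = {}\<close> unfolding separated_def by blast
    then show False using \<open>u t i \<le> 0\<close> \<open>c \<le> \<theta>\<close> \<open>0 \<le> c\<close> by linarith
  qed
next
  case (Suc r)
  show ?case
  proof
    assume sep: "separated t A c \<theta>"
    have pow_le: "a ^ Suc r \<le> 1" "a ^ r \<le> 1"
      using power_le_one[OF less_imp_le[OF a_pos] a_le_1] by blast+
    have "0 \<le> real (Suc r) * e" using e_nonneg by simp
    then have "0 \<le> a ^ Suc r * \<theta>" using Suc.prems(3) \<open>0 \<le> c\<close> by linarith
    then have "0 \<le> \<theta>" using a_pos by (metis mult_pos_neg not_le zero_less_power)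
    then have "a ^ Suc r * \<theta> \<le> \<theta>"
      using pow_le(1) a_pos by (simp add: mult_left_le_one_le)
    then have "c \<le> \<theta>" using Suc.prems(3) \<open>0 \<le> real (Suc r) * e\<close> by linarith
    obtain i0 where "u t i0 \<le> 0" using nonpos_node by blast
    then have "\<not> \<theta> < u t i0" using \<open>c \<le> \<theta>\<close> \<open>0 \<le> c\<close> by linarith
    then have "A \<noteq> {}" using sep unfolding separated_def by blast
    obtain i1 where "c < u t i1" using assms(4) by blast
    then have "i1 \<notin> A" using sep unfolding separated_def by (meson not_le)
    then have "A \<noteq> UNIV" by blast
    obtain s where s: "t \<le> s" "crosses s A"
      and before: "\<And>s'. t \<le> s' \<Longrightarrow> s' < s \<Longrightarrow> \<not> crosses s' A"
      using first_crossing[OF \<open>A \<noteq> {}\<close> \<open>A \<noteq> UNIV\<close>] by blast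
    have "separated (t + (s - t)) A c \<theta>"
      using separated_persists[OF sep, of "s - t"] before by simp
    then have sep_s: "separated s A c \<theta>" using s(1) by simp
    have "K \<le> s" using Suc.prems(1) s(1) by linarith
    obtain A' where A': "A' \<subset> A" "separated (Suc s) A' c (a * \<theta> - e)"
      using separated_shrinks[OF \<open>K \<le> s\<close> sep_s s(2)] by blast
    have "card A' < card A" using A'(1) by (simp add: psubset_card_mono)
    then have "card A' \<le> r" using Suc.prems(2) by simp
    moreover have "a ^ r * e \<le> e"
      using pow_le(2) e_nonneg a_pos by (simp add: mult_left_le_one_le)
    then have "c + r * e \<le> a ^ r * (a * \<theta> - e)"
      using Suc.prems(3) by (simp add: algebra_simps)
    ultimately show False using Suc.IH[of "Suc s" A' "a * \<theta> - e"] \<open>K \<le> s\<close> A'(2) by simp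
  qed
qed

text \<open>Proof: the geometric thresholds
  b_j = j n e / a^(n j), j \<le> n, satisfy b_j + n e \<le> a^n b_(j+1); by pigeonhole
  no deficit at time K lies in some interval (b_j, b_(j+1)], which would be a
  separation forbidden by no_separation.\<close>
theorem deficit_spread_bound:
  assumes spread: "\<And>t. \<exists>i. D \<le> u t i"
  shows "D * (a ^ CARD('n)) ^ CARD('n) \<le> real CARD('n) * real CARD('n) * e"
proof (rule ccontr)
  define n where "n = CARD('n)"
  define q where "q = a ^ n"
  define b where "b j = real j * (n * e) / q ^ j" for j
  have q: "0 < q" "q \<le> 1" unfolding q_def using a_pos a_le_1 by (simp_all add: power_le_one)
  assume "\<not> ?thesis"
  then have "\<not> D * q ^ n \<le> real n * real n * e" unfolding n_def q_def .
  then have small: "b n < D" unfolding b_def using q(1)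
    by (simp add: divide_less_eq mult.commute mult.left_commute)
  have b_nonneg: "0 \<le> b j" for j unfolding b_def using q e_nonneg by simp
  have b_step: "b j + n * e \<le> q * b (Suc j)" for j
  proof -
    have "n * e \<le> n * e / q ^ j"
      using q e_nonneg by (simp add: le_divide_eq mult_left_le power_le_one)
    moreover have "q * b (Suc j) = b j + n * e / q ^ j"
      unfolding b_def using q(1) by (simp add: field_simps)
    ultimately show ?thesis by linarith
  qed
  have b_mono: "b j \<le> b (Suc j)" for j
  proof -
    have "q * b (Suc j) \<le> b (Suc j)" using q b_nonneg by (simp add: mult_left_le_one_le)
    moreover have "0 \<le> real n * e" using e_nonneg by simp
    ultimately show ?thesis using b_step[of j] by linarith
  qed
  define S where "S j = {i. u K i \<le> b j}" for j
  have "S j \<subseteq> S (Suc j)" for j unfolding S_def using b_mono order_trans by blast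
  moreover have "S 0 \<noteq> {}" using nonpos_node[of K] unfolding S_def b_def by auto
  ultimately obtain j where "j < n" and stall: "S j = S (Suc j)"
    using ascending_chain_stalls[of S] unfolding n_def by blast
  have "b j \<le> b n" using \<open>j < n\<close> b_mono by (simp add: lift_Suc_mono_le)
  have above: "\<exists>i. b j < u s i" for s
  proof -
    obtain i where "D \<le> u s i" using spread by blast
    then show ?thesis using \<open>b j \<le> b n\<close> small by (intro exI[of _ i]) linarith
  qed
  have "card (S j) \<le> n" unfolding n_def by (rule card_mono) simp_all
  moreover have "b j + n * e \<le> a ^ n * b (Suc j)" using b_step unfolding q_def .
  ultimately have "\<not> separated K (S j) (b j) (b (Suc j))"
    by (rule no_separation[OF order_refl _ b_nonneg above])
  moreover have "b (Suc j) < u K i" if "i \<notin> S j" for i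
    using that unfolding stall unfolding S_def by simp
  then have "separated K (S j) (b j) (b (Suc j))"
    unfolding separated_def S_def by simp
  ultimately show False by contradiction
qed

end

section \<open>The algorithm\<close>

lemma self_neighbor: "i \<in> neighbors E k i"
  by (simp add: neighbors_def)

lemma cut_crossed_infinitely_often:
  fixes E :: "nat \<Rightarrow> ('n \<times> 'n) set"
  assumes bid: "\<forall>k. bidirectional (E k)" and ijc: "infinitely_jointly_connected E"
    and "A \<noteq> {}" "A \<noteq> UNIV"
  shows "\<exists>s\<ge>t. \<exists>i\<in>A. \<exists>j\<in>neighbors E s i. j \<notin> A"
proof -
  obtain p q where "p \<in> A" "q \<notin> A" using assms(3,4) by blast
  moreover have "(p, q) \<in> (union_graph_from E t)\<^sup>*"
    using ijc unfolding infinitely_jointly_connected_def connected_graph_def by blast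
  ultimately obtain i j where ij: "(i, j) \<in> union_graph_from E t" "i \<in> A" "j \<notin> A"
    using rtrancl_leaves_set by metis
  then obtain s where "t \<le> s" "(i, j) \<in> E s" unfolding union_graph_from_def by auto
  then have "j \<in> neighbors E s i"
    using bid unfolding bidirectional_def neighbors_def by blast
  then show ?thesis using ij \<open>t \<le> s\<close> by blast
qed

lemma own_value_between:
  fixes x :: "'n::finite \<Rightarrow> real"
  shows "Min (x ` neighbors E k i) \<le> x i" and "x i \<le> Max (x ` neighbors E k i)"
  by (simp_all add: self_neighbor)

lemma weights_at:
  assumes "in_A_ave \<eta> \<alpha>"
  shows "0 \<le> \<eta> k" "0 \<le> \<alpha> k" "\<alpha> k \<le> 1 - \<eta> k"
  using assms by (auto simp: in_A_ave_def less_imp_le)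

lemma min_weight_le_one:
  assumes "in_A_ave \<eta> \<alpha>" "\<forall>k. a \<le> \<alpha> k"
  shows "a \<le> 1"
proof -
  have "a \<le> \<alpha> 0" using assms(2) by blast
  then show ?thesis using weights_at[OF assms(1), of 0] by linarith
qed

lemma traj_step_bounds:
  fixes E :: "nat \<Rightarrow> ('n::finite \<times> 'n) set"
  assumes "in_A_ave \<eta> \<alpha>"
  shows "Min (traj E \<eta> \<alpha> k0 x0 t ` neighbors E (k0 + t) i) \<le> traj E \<eta> \<alpha> k0 x0 (Suc t) i"
    and "traj E \<eta> \<alpha> k0 x0 (Suc t) i \<le> Max (traj E \<eta> \<alpha> k0 x0 t ` neighbors E (k0 + t) i)"
proof -
  let ?x = "traj E \<eta> \<alpha> k0 x0 t" and ?N = "neighbors E (k0 + t) i"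
  note mix = mix_between[OF weights_at[OF assms, of "k0 + t"]
      own_value_between[where x = ?x and E = E and k = "k0 + t" and i = i]]
  show "Min (?x ` ?N) \<le> traj E \<eta> \<alpha> k0 x0 (Suc t) i"
    using mix(1) by (simp add: step_def)
  show "traj E \<eta> \<alpha> k0 x0 (Suc t) i \<le> Max (?x ` ?N)"
    using mix(2) by (simp add: step_def)
qed

lemma traj_step_min_weight:
  fixes E :: "nat \<Rightarrow> ('n::finite \<times> 'n) set"
  assumes "in_A_ave \<eta> \<alpha>" "\<forall>k. a \<le> \<alpha> k"
  shows "traj E \<eta> \<alpha> k0 x0 (Suc t) i
     \<le> a * Min (traj E \<eta> \<alpha> k0 x0 t ` neighbors E (k0 + t) i)
       + (1 - a) * Max (traj E \<eta> \<alpha> k0 x0 t ` neighbors E (k0 + t) i)"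
proof -
  let ?x = "traj E \<eta> \<alpha> k0 x0 t" and ?N = "neighbors E (k0 + t) i"
  have "Min (?x ` ?N) \<le> Max (?x ` ?N)"
    using own_value_between[of ?x] order_trans by blast
  then show ?thesis
    using mix_upper[OF weights_at(1)[OF assms(1)] _ weights_at(3)[OF assms(1)]
        own_value_between(2)[where x = ?x and E = E and k = "k0 + t" and i = i], of a] assms(2)
    by (simp add: step_def)
qed

lemma traj_max_decseq:
  fixes E :: "nat \<Rightarrow> ('n::finite \<times> 'n) set"
  assumes "in_A_ave \<eta> \<alpha>"
  shows "decseq (\<lambda>t. Max (range (traj E \<eta> \<alpha> k0 x0 t)))"
proof (rule decseq_SucI)
  fix t
  let ?x = "traj E \<eta> \<alpha> k0 x0 t" and ?y = "traj E \<eta> \<alpha> k0 x0 (Suc t)"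
  obtain i where i: "?y i = Max (range ?y)" using Max_image_attained[of UNIV ?y] by auto
  let ?N = "neighbors E (k0 + t) i"
  have "?y i \<le> Max (?x ` ?N)" by (rule traj_step_bounds(2)[OF assms])
  also have "\<dots> \<le> Max (range ?x)" by (rule Max_mono) (auto simp: neighbors_def)
  finally show "Max (range ?y) \<le> Max (range ?x)" using i by simp
qed

lemma traj_min_incseq:
  fixes E :: "nat \<Rightarrow> ('n::finite \<times> 'n) set"
  assumes "in_A_ave \<eta> \<alpha>"
  shows "incseq (\<lambda>t. Min (range (traj E \<eta> \<alpha> k0 x0 t)))"
proof (rule incseq_SucI)
  fix t
  let ?x = "traj E \<eta> \<alpha> k0 x0 t" and ?y = "traj E \<eta> \<alpha> k0 x0 (Suc t)"
  obtain i where i: "?y i = Min (range ?y)" using Min_image_attained[of UNIV ?y] by auto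
  let ?N = "neighbors E (k0 + t) i"
  have "Min (range ?x) \<le> Min (?x ` ?N)" by (rule Min_antimono) (auto simp: neighbors_def)
  also have "\<dots> \<le> ?y i" by (rule traj_step_bounds(1)[OF assms])
  finally show "Min (range ?x) \<le> Min (range ?y)" using i by simp
qed

lemma traj_pulled_by_neighbor:
  fixes E :: "nat \<Rightarrow> ('n::finite \<times> 'n) set"
  assumes ave: "in_A_ave \<eta> \<alpha>" and "0 \<le> a" and min_weight: "\<forall>k. a \<le> \<alpha> k"
    and nbr: "j \<in> neighbors E (k0 + t) i"
    and bound: "Max (range (traj E \<eta> \<alpha> k0 x0 t)) \<le> B"
  shows "traj E \<eta> \<alpha> k0 x0 (Suc t) i \<le> a * traj E \<eta> \<alpha> k0 x0 t j + (1 - a) * B"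
proof -
  let ?x = "traj E \<eta> \<alpha> k0 x0 t" and ?N = "neighbors E (k0 + t) i"
  have "a \<le> 1" by (rule min_weight_le_one[OF ave min_weight])
  have "Min (?x ` ?N) \<le> ?x j" using nbr by simp
  then have "a * Min (?x ` ?N) \<le> a * ?x j" using \<open>0 \<le> a\<close> by (rule mult_left_mono)
  moreover have "Max (?x ` ?N) \<le> Max (range ?x)" by (rule Max_mono) (auto simp: neighbors_def)
  then have "Max (?x ` ?N) \<le> B" using bound by (rule order_trans)
  then have "(1 - a) * Max (?x ` ?N) \<le> (1 - a) * B"
    using \<open>a \<le> 1\<close> by (intro mult_left_mono) simp_all
  ultimately show ?thesis using traj_step_min_weight[OF ave min_weight, of E k0 x0 t i] by linarith
qed

lemma traj_deficit_dynamics: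
  fixes E :: "nat \<Rightarrow> ('n::finite \<times> 'n) set"
  assumes bid: "\<forall>k. bidirectional (E k)" and ijc: "infinitely_jointly_connected E"
    and ave: "in_A_ave \<eta> \<alpha>" and "0 < a" and min_weight: "\<forall>k. a \<le> \<alpha> k"
    and below_max: "\<And>t. Ms \<le> Max (range (traj E \<eta> \<alpha> k0 x0 t))"
    and near_max: "\<And>t. K \<le> t \<Longrightarrow> Max (range (traj E \<eta> \<alpha> k0 x0 t)) \<le> Ms + e"
    and "0 \<le> e"
  shows "deficit_dynamics (\<lambda>t. neighbors E (k0 + t)) (\<lambda>t i. Ms - traj E \<eta> \<alpha> k0 x0 t i) K a e"
proof
  let ?x = "traj E \<eta> \<alpha> k0 x0"
  show "i \<in> neighbors E (k0 + t) j" if "j \<in> neighbors E (k0 + t) i" for t i j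
    using that bid unfolding neighbors_def bidirectional_def by blast
  show "i \<in> neighbors E (k0 + t) i" for t i by (rule self_neighbor)
  show "\<exists>j\<in>neighbors E (k0 + t) i. Ms - ?x t j \<le> Ms - ?x (Suc t) i" for t i
    using Max_image_attained[of "neighbors E (k0 + t) i" "?x t"]
      traj_step_bounds(2)[OF ave, of E k0 x0 t i] by (fastforce simp: neighbors_def)
  show "\<exists>j\<in>neighbors E (k0 + t) i. Ms - ?x (Suc t) i \<le> Ms - ?x t j" for t i
    using Min_image_attained[of "neighbors E (k0 + t) i" "?x t"]
      traj_step_bounds(1)[OF ave, of E k0 x0 t i] by (fastforce simp: neighbors_def)
  show "a * (Ms - ?x t j) - e \<le> Ms - ?x (Suc t) i"
    if "K \<le> t" "j \<in> neighbors E (k0 + t) i" for t i j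
  proof -
    have "?x (Suc t) i \<le> a * ?x t j + (1 - a) * (Ms + e)"
      using traj_pulled_by_neighbor[OF ave _ min_weight that(2) near_max[OF that(1)]] \<open>0 < a\<close>
      by simp
    moreover have "0 \<le> a * e" using \<open>0 < a\<close> \<open>0 \<le> e\<close> by simp
    ultimately show ?thesis by (simp add: algebra_simps)
  qed
  show "\<exists>i. Ms - ?x t i \<le> 0" for t
  proof -
    obtain i where "?x t i = Max (range (?x t))" using Max_image_attained[of UNIV "?x t"] by auto
    then show ?thesis using below_max[of t] by (intro exI[of _ i]) linarith
  qed
  show "\<exists>s\<ge>t. \<exists>i\<in>A. \<exists>j\<in>neighbors E (k0 + s) i. j \<notin> A"
    if cut: "A \<noteq> {}" "A \<noteq> UNIV" for t A
  proof -
    obtain s where "k0 + t \<le> s" "\<exists>i\<in>A. \<exists>j\<in>neighbors E s i. j \<notin> A"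
      using cut_crossed_infinitely_often[OF bid ijc cut] by blast
    then show ?thesis by (intro exI[of _ "s - k0"]) auto
  qed
  show "0 < a" "0 \<le> e" by fact+
  show "a \<le> 1" by (rule min_weight_le_one[OF ave min_weight])
qed

text \<open>The limit M_* of the global maximum does not exceed any upper bound m_* of
  the global minimum: otherwise the spread D = M_* - m_* would persist, against
  deficit_spread_bound applied with e small.\<close>
lemma traj_max_limit_le:
  fixes E :: "nat \<Rightarrow> ('n::finite \<times> 'n) set"
  assumes bid: "\<forall>k. bidirectional (E k)" and ijc: "infinitely_jointly_connected E"
    and ave: "in_A_ave \<eta> \<alpha>" and "0 < a" and min_weight: "\<forall>k. a \<le> \<alpha> k"
    and lim: "(\<lambda>t. Max (range (traj E \<eta> \<alpha> k0 x0 t))) \<longlonglongrightarrow> Ms"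
    and below_max: "\<And>t. Ms \<le> Max (range (traj E \<eta> \<alpha> k0 x0 t))"
    and above_min: "\<And>t. Min (range (traj E \<eta> \<alpha> k0 x0 t)) \<le> ms"
  shows "Ms \<le> ms"
proof (rule ccontr)
  define n where "n = CARD('n)"
  define q where "q = (a ^ n) ^ n"
  define D where "D = Ms - ms"
  define e where "e = D * q / (real n * real n + 1)"
  assume "\<not> Ms \<le> ms"
  then have "0 < D" "0 < q" using \<open>0 < a\<close> unfolding D_def q_def by simp_all
  then have Dq: "0 < D * q" by simp
  have den: "0 < real n * real n + 1" by (simp add: add_nonneg_pos)
  have "0 < e" unfolding e_def using Dq den by simp
  have "real n * real n * e = D * q * (real n * real n) / (real n * real n + 1)"
    unfolding e_def by simp
  also have "\<dots> < D * q" using Dq den by (simp add: divide_less_eq algebra_simps)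
  finally have small: "real n * real n * e < D * q" .
  obtain K where K: "\<forall>t\<ge>K. dist (Max (range (traj E \<eta> \<alpha> k0 x0 t))) Ms < e"
    using lim \<open>0 < e\<close> unfolding lim_sequentially by blast
  have "Max (range (traj E \<eta> \<alpha> k0 x0 t)) \<le> Ms + e" if "K \<le> t" for t
  proof -
    have "\<bar>Max (range (traj E \<eta> \<alpha> k0 x0 t)) - Ms\<bar> < e"
      using K that unfolding dist_real_def by blast
    then show ?thesis unfolding abs_less_iff by linarith
  qed
  then interpret deficit_dynamics "\<lambda>t. neighbors E (k0 + t)"
      "\<lambda>t i. Ms - traj E \<eta> \<alpha> k0 x0 t i" K a e
    using traj_deficit_dynamics[OF bid ijc ave \<open>0 < a\<close> min_weight below_max] \<open>0 < e\<close> by simp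
  have "\<exists>i. D \<le> Ms - traj E \<eta> \<alpha> k0 x0 t i" for t
  proof -
    obtain i where "traj E \<eta> \<alpha> k0 x0 t i = Min (range (traj E \<eta> \<alpha> k0 x0 t))"
      using Min_image_attained[of UNIV "traj E \<eta> \<alpha> k0 x0 t"] by auto
    then show ?thesis using above_min[of t] unfolding D_def by (intro exI[of _ i]) linarith
  qed
  then have "D * q \<le> real n * real n * e"
    using deficit_spread_bound unfolding n_def q_def by blast
  then show False using small by linarith
qed

lemma consensus_min_weight:
  fixes E :: "nat \<Rightarrow> ('n::finite \<times> 'n) set"
  assumes bid: "\<forall>k. bidirectional (E k)" and ijc: "infinitely_jointly_connected E"
    and ave: "in_A_ave \<eta> \<alpha>" and "0 < a" and min_weight: "\<forall>k. a \<le> \<alpha> k"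
  shows "global_asymptotic_consensus E \<eta> \<alpha>"
  unfolding global_asymptotic_consensus_def
proof (intro allI)
  fix k0 x0
  define M where "M t = Max (range (traj E \<eta> \<alpha> k0 x0 t))" for t
  define m where "m t = Min (range (traj E \<eta> \<alpha> k0 x0 t))" for t
  have M_dec: "decseq M" and m_inc: "incseq m"
    unfolding M_def m_def using traj_max_decseq[OF ave] traj_min_incseq[OF ave] by auto
  have between: "m t \<le> traj E \<eta> \<alpha> k0 x0 t i" "traj E \<eta> \<alpha> k0 x0 t i \<le> M t" for t i
    unfolding M_def m_def by simp_all
  have m_le_M: "m t \<le> M t" for t using between[of t undefined] by linarith
  have "m 0 \<le> M t" for t using incseqD[OF m_inc, of 0 t] m_le_M[of t] by linarith
  then obtain Ms where Ms: "M \<longlonglongrightarrow> Ms" "\<forall>t. Ms \<le> M t"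
    using decseq_convergent[OF M_dec] by blast
  have "m t \<le> M 0" for t using decseqD[OF M_dec, of 0 t] m_le_M[of t] by linarith
  then obtain ms where ms: "m \<longlonglongrightarrow> ms" "\<forall>t. m t \<le> ms"
    using incseq_convergent[OF m_inc] by blast
  have "Ms \<le> ms"
    using traj_max_limit_le[OF bid ijc ave \<open>0 < a\<close> min_weight, of k0 x0 Ms ms] Ms ms
    unfolding M_def m_def by blast
  moreover have "ms \<le> Ms" using LIMSEQ_le[OF ms(1) Ms(1)] m_le_M by blast
  ultimately have "(\<lambda>t. traj E \<eta> \<alpha> k0 x0 t i) \<longlonglongrightarrow> Ms" for i
    using real_tendsto_sandwich[of m "\<lambda>t. traj E \<eta> \<alpha> k0 x0 t i" sequentially M Ms]
      between ms(1) Ms(1) by simp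
  then show "\<exists>z. \<forall>i. (\<lambda>t. traj E \<eta> \<alpha> k0 x0 t i) \<longlonglongrightarrow> z" by blast
qed

section \<open>Reduction by symmetry\<close>

text \<open>Negating the initial values swaps the roles of min and max, i.e. of the
  weights \<alpha>_k and 1 - \<eta>_k - \<alpha>_k.\<close>
lemma traj_mirror:
  fixes E :: "nat \<Rightarrow> ('n::finite \<times> 'n) set"
  shows "traj E \<eta> \<alpha> k0 x0 m i = - traj E \<eta> (\<lambda>k. 1 - \<eta> k - \<alpha> k) k0 (\<lambda>i. - x0 i) m i"
proof (induction m arbitrary: i)
  case 0
  then show ?case by simp
next
  case (Suc m)
  let ?x = "traj E \<eta> \<alpha> k0 x0 m"
    and ?y = "traj E \<eta> (\<lambda>k. 1 - \<eta> k - \<alpha> k) k0 (\<lambda>i. - x0 i) m"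
    and ?N = "neighbors E (k0 + m) i"
  have y: "?y = (\<lambda>i. - ?x i)" using Suc.IH by simp
  have fin: "finite (?x ` ?N)" "?x ` ?N \<noteq> {}" by (auto simp: neighbors_def)
  have "?y ` ?N = uminus ` (?x ` ?N)" unfolding y by (simp add: image_image)
  then have mn: "Min (?y ` ?N) = - Max (?x ` ?N)" and mx: "Max (?y ` ?N) = - Min (?x ` ?N)"
    using minus_Max_eq_Min[OF fin] minus_Min_eq_Max[OF fin] by simp_all
  have yi: "?y i = - ?x i" using Suc.IH by simp
  show ?case
    unfolding traj.simps step_def mn mx yi by (simp add: algebra_simps)
qed

lemma consensus_mirror:
  fixes E :: "nat \<Rightarrow> ('n::finite \<times> 'n) set"
  assumes "global_asymptotic_consensus E \<eta> (\<lambda>k. 1 - \<eta> k - \<alpha> k)"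
  shows "global_asymptotic_consensus E \<eta> \<alpha>"
  unfolding global_asymptotic_consensus_def
proof (intro allI)
  fix k0 x0
  obtain z where "\<forall>i. (\<lambda>m. traj E \<eta> (\<lambda>k. 1 - \<eta> k - \<alpha> k) k0 (\<lambda>i. - x0 i) m i) \<longlonglongrightarrow> z"
    using assms unfolding global_asymptotic_consensus_def by blast
  then have "(\<lambda>m. traj E \<eta> \<alpha> k0 x0 m i) \<longlonglongrightarrow> - z" for i
    unfolding traj_mirror[of E \<eta> \<alpha> k0 x0] by (intro tendsto_minus) simp
  then show "\<exists>z. \<forall>i. (\<lambda>m. traj E \<eta> \<alpha> k0 x0 m i) \<longlonglongrightarrow> z" by blast
qed

lemma in_A_ave_mirror: "in_A_ave \<eta> \<alpha> \<Longrightarrow> in_A_ave \<eta> (\<lambda>k. 1 - \<eta> k - \<alpha> k)"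
  unfolding in_A_ave_def by auto

theorem theorem6:
  fixes E :: "nat \<Rightarrow> ('n::finite \<times> 'n) set"
    and \<eta> \<alpha> :: "nat \<Rightarrow> real" and \<alpha>s :: real
  assumes "CARD('n) \<ge> 3"
    and "\<forall>k. bidirectional (E k)"
    and "infinitely_jointly_connected E"
    and "in_A_ave \<eta> \<alpha>"
    and "0 < \<alpha>s" and "\<alpha>s < 1"
    and "(\<forall>k. \<alpha> k \<ge> \<alpha>s) \<or> (\<forall>k. 1 - \<alpha> k - \<eta> k \<ge> \<alpha>s)"
  shows "global_asymptotic_consensus E \<eta> \<alpha>"
  using assms(7)
proof
  assume "\<forall>k. \<alpha> k \<ge> \<alpha>s"
  then show ?thesis using consensus_min_weight[OF assms(2-5)] by blast
next
  assume "\<forall>k. 1 - \<alpha> k - \<eta> k \<ge> \<alpha>s"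
  then have "\<forall>k. \<alpha>s \<le> 1 - \<eta> k - \<alpha> k" by (simp add: algebra_simps)
  then have "global_asymptotic_consensus E \<eta> (\<lambda>k. 1 - \<eta> k - \<alpha> k)"
    using consensus_min_weight[OF assms(2,3) in_A_ave_mirror[OF assms(4)] assms(5)] by blast
  then show ?thesis by (rule consensus_mirror)
qed

end
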